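(* Let $V=\bigoplus_{j\in\mathbb{Z}}V_j$ be an irreducible quasifinite $W$-module which has neither a highest weight vector nor a lowest weight vector. Then for all $i,j\in\mathbb{Z}$ with $i\neq0,-1$, the linear map $$V_j\to V_{i+j}\oplus V_{i+j+1}\oplus V_{i+j},\qquad v\mapsto\big((t^iD)v,\,(t^{i+1}D)v,\,(t^iD^2)v\big)$$ is injective. In particular, $\dim V_j\le 2\dim V_0+\dim V_1$ for all $j\in\mathbb{Z}$.
   Context: Let $\mathbb{F}$ be an algebraically closed field of characteristic zero, and let $W=\mathcal{W}(\mathbb{Z},1)^{(1)}=\mathrm{span}\{t^iD^j\mid i\in\mathbb{Z},\,j\ge1\}$. The Lie bracket is $$[t^iDf(D),t^jDg(D)]=t^{i+j}D\big((D+j)f(D+j)g(D)-(D+i)g(D+i)f(D)\big)$$ for $f,g\in\mathbb{F}[D]$. The algebra is $\mathbb{Z}$-graded by $W_i=\{t^iDf(D)\mid f\in\mathbb{F}[D]\}$. Let $W_+=\bigoplus_{i>0}W_i$ and $W_-=\bigoplus_{i<0}W_i$; note that $W_0$ is commutative. A $W$-module $V$ is quasifinite if $V=\bigoplus_{j\in\mathbb{Z}}V_j$ with $W_iV_j\subset V_{i+j}$ and $\dim V_j<\infty$ for all $i,j$. A highest (resp. lowest) weight vector is a nonzero homogeneous vector $v$ that is a common eigenvector of $W_0$ and satisfies $W_+v=0$ (resp. $W_-v=0$). *)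

theory Defs
  imports Main "HOL-Computational_Algebra.Polynomial"
begin

text \<open>The Lie algebra W = span{t^i D^j | i in Z, j >= 1}; its elements are finite sums of
  elements t^i D f(D) with f a polynomial. A representation is given by
  rho i f = action of t^i D f(D).\<close>

text \<open>The polynomial h with [t^i D f(D), t^j D g(D)] = t^(i+j) D h(D).\<close>
definition W_bracket_poly :: "int \<Rightarrow> 'a::comm_ring_1 poly \<Rightarrow> int \<Rightarrow> 'a poly \<Rightarrow> 'a poly" where
  "W_bracket_poly i f j g =
     [:of_int j, 1:] * pcompose f [:of_int j, 1:] * g
   - [:of_int i, 1:] * pcompose g [:of_int i, 1:] * f"

definition W_module :: "('a::field \<Rightarrow> 'v::ab_group_add \<Rightarrow> 'v)
    \<Rightarrow> (int \<Rightarrow> 'a poly \<Rightarrow> 'v \<Rightarrow> 'v) \<Rightarrow> bool" where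
  "W_module scale rho \<longleftrightarrow>
     vector_space scale \<and>
     (\<forall>i f v w. rho i f (v + w) = rho i f v + rho i f w) \<and>
     (\<forall>i f c v. rho i f (scale c v) = scale c (rho i f v)) \<and>
     (\<forall>i f g v. rho i (f + g) v = rho i f v + rho i g v) \<and>
     (\<forall>i f c v. rho i (smult c f) v = scale c (rho i f v)) \<and>
     (\<forall>i j f g v. rho i f (rho j g v) - rho j g (rho i f v)
                    = rho (i + j) (W_bracket_poly i f j g) v)"

definition fin_dim_subspace :: "('a::field \<Rightarrow> 'v::ab_group_add \<Rightarrow> 'v) \<Rightarrow> 'v set \<Rightarrow> bool" where
  "fin_dim_subspace scale U \<longleftrightarrow>
     module.subspace scale U \<and> (\<exists>B. finite B \<and> B \<subseteq> U \<and> module.span scale B = U)"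

definition quasifinite :: "('a::field \<Rightarrow> 'v::ab_group_add \<Rightarrow> 'v)
    \<Rightarrow> (int \<Rightarrow> 'a poly \<Rightarrow> 'v \<Rightarrow> 'v) \<Rightarrow> (int \<Rightarrow> 'v set) \<Rightarrow> bool" where
  "quasifinite scale rho Vg \<longleftrightarrow>
     (\<forall>j. fin_dim_subspace scale (Vg j)) \<and>
     (\<forall>v. \<exists>!c :: int \<Rightarrow> 'v. finite {j. c j \<noteq> 0} \<and> (\<forall>j. c j \<in> Vg j)
            \<and> v = sum c {j. c j \<noteq> 0}) \<and>
     (\<forall>i j f v. v \<in> Vg j \<longrightarrow> rho i f v \<in> Vg (i + j))"

definition W_irreducible :: "('a::field \<Rightarrow> 'v::ab_group_add \<Rightarrow> 'v)
    \<Rightarrow> (int \<Rightarrow> 'a poly \<Rightarrow> 'v \<Rightarrow> 'v) \<Rightarrow> bool" where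
  "W_irreducible scale rho \<longleftrightarrow>
     (\<exists>v::'v. v \<noteq> 0) \<and>
     (\<forall>U. module.subspace scale U \<and> (\<forall>i f u. u \<in> U \<longrightarrow> rho i f u \<in> U)
          \<longrightarrow> U = {0} \<or> U = UNIV)"

definition highest_weight_vector :: "('a::field \<Rightarrow> 'v::ab_group_add \<Rightarrow> 'v)
    \<Rightarrow> (int \<Rightarrow> 'a poly \<Rightarrow> 'v \<Rightarrow> 'v) \<Rightarrow> (int \<Rightarrow> 'v set) \<Rightarrow> 'v \<Rightarrow> bool" where
  "highest_weight_vector scale rho Vg v \<longleftrightarrow>
     v \<noteq> 0 \<and> (\<exists>j. v \<in> Vg j) \<and> (\<forall>f. \<exists>c. rho 0 f v = scale c v) \<and>
     (\<forall>i f. i > 0 \<longrightarrow> rho i f v = 0)"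

definition lowest_weight_vector :: "('a::field \<Rightarrow> 'v::ab_group_add \<Rightarrow> 'v)
    \<Rightarrow> (int \<Rightarrow> 'a poly \<Rightarrow> 'v \<Rightarrow> 'v) \<Rightarrow> (int \<Rightarrow> 'v set) \<Rightarrow> 'v \<Rightarrow> bool" where
  "lowest_weight_vector scale rho Vg v \<longleftrightarrow>
     v \<noteq> 0 \<and> (\<exists>j. v \<in> Vg j) \<and> (\<forall>f. \<exists>c. rho 0 f v = scale c v) \<and>
     (\<forall>i f. i < 0 \<longrightarrow> rho i f v = 0)"

end

theory Submission
  imports Defs
begin

text \<open>Suppose \<open>v \<in> V\<^sub>j\<close> is killed by \<open>t\<^sup>iD\<close>, \<open>t\<^sup>i\<^sup>+\<^sup>1D\<close> and \<open>t\<^sup>iD\<^sup>2\<close>. The automorphism \<open>t \<mapsto> t\<inverse>\<close>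
  exchanges highest and lowest weight vectors and reduces \<open>i \<le> -2\<close> to \<open>i \<ge> 1\<close>. Brackets of
  \<open>t\<^sup>iD\<close> and \<open>t\<^sup>i\<^sup>+\<^sup>1D\<close> give every \<open>t\<^sup>lD\<close> with \<open>l > i\<^sup>2 + i\<close>, and with \<open>t\<^sup>iD\<^sup>2\<close> every \<open>t\<^sup>lD\<^sup>2\<close>
  for large \<open>l\<close>. Bracketing with these raises the degrees of the polynomials \<open>f\<close> with
  \<open>t\<^sup>lDf(D)v = 0\<close>; as \<open>V\<^sub>l\<^sub>+\<^sub>j\<close> is finite-dimensional only finitely many degrees are missing, so
  eventually a whole \<open>W\<^sub>l\<close> kills \<open>v\<close>, and then so does \<open>W\<^sub>l\<close> for every \<open>l \<gg> 0\<close>.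
  Such vectors form a submodule, hence all of \<open>V\<close>, uniformly on each \<open>V\<^sub>j\<close>. Since \<open>W\<^sub>+\<close> kills
  no nonzero homogeneous vector (\<open>W\<^sub>0\<close> would have a common eigenvector on the
  \<open>W\<^sub>+\<close>-invariants), \<open>v\<close> can be pushed up to some \<open>V\<^sub>m\<close> so far above \<open>V\<^sub>j\<close> that \<open>t\<^sup>pD\<close>
  kills both the new vector and \<open>V\<^sub>j\<close> for \<open>p \<ge> m - j\<close>; the brackets \<open>[t\<^sup>pD, t\<^sup>l\<^sup>-\<^sup>pDg(D)]\<close>
  then show that \<open>W\<^sub>0 + W\<^sub>+\<close> kills it, a contradiction. The dimension bound is the case
  \<open>i = -j\<close>.\<close>

section \<open>Polynomial identities for the bracket\<close>

lemma pcompose_shift_minus_self: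
  fixes p :: "'a::comm_ring_1 poly"
  assumes "degree p \<le> Suc n"
  shows "degree (pcompose p [:b,1:] - p) \<le> n
    \<and> coeff (pcompose p [:b,1:] - p) n = of_nat (Suc n) * b * coeff p (Suc n)"
  using assms
proof (induction p arbitrary: n)
  case 0
  then show ?case by simp
next
  case (pCons c r)
  have eq: "pcompose (pCons c r) [:b,1:] - pCons c r
      = pCons 0 (pcompose r [:b,1:] - r) + smult b (pcompose r [:b,1:])"
    by (simp add: pcompose_pCons mult_pCons_left algebra_simps)
  have deg_r: "degree r \<le> n"
    using pCons.prems by (cases "r = 0") auto
  show ?case
  proof (cases n)
    case 0
    then obtain a where "r = [:a:]"
      using deg_r by (metis degree_eq_zeroE le_zero_eq)
    then show ?thesis
      unfolding eq using 0 by simp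
  next
    case (Suc m)
    with pCons.IH[of m] deg_r have IH: "degree (pcompose r [:b,1:] - r) \<le> m"
      "coeff (pcompose r [:b,1:] - r) m = of_nat (Suc m) * b * coeff r (Suc m)"
      by auto
    have "coeff (pcompose r [:b,1:] - r) n = 0"
      using IH(1) Suc by (intro coeff_eq_0) simp
    then have top: "coeff (pcompose r [:b,1:]) n = coeff r n"
      by simp
    have "degree (pcompose r [:b,1:]) \<le> n"
      using deg_r degree_pcompose_le[of r "[:b,1:]"] by simp
    then show ?thesis
      unfolding eq using IH Suc top
      by (auto simp: algebra_simps intro!: degree_add_le order_trans[OF degree_smult_le])
  qed
qed

lemma W_bracket_poly_antisym: "W_bracket_poly i f j g = - W_bracket_poly j g i f"
  by (simp add: W_bracket_poly_def)

lemma W_bracket_poly_zero_zero: "W_bracket_poly 0 f 0 g = (0 :: 'a::comm_ring_1 poly)"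
  by (simp add: W_bracket_poly_def mult.commute)

lemma W_bracket_poly_one_one:
  "W_bracket_poly a 1 b 1 = smult (of_int (b - a)) (1 :: 'a::comm_ring_1 poly)"
  by (simp add: W_bracket_poly_def pcompose_1)

lemma W_bracket_poly_X_one:
  "W_bracket_poly a [:0,1:] b 1
     = smult (of_int b ^ 2) 1 + smult (of_int (2 * b - a)) ([:0,1:] :: 'a::comm_ring_1 poly)"
  by (simp add: W_bracket_poly_def pcompose_pCons pcompose_1 algebra_simps power2_eq_square)

lemma W_bracket_poly_X_right:
  "W_bracket_poly a f b [:0,1:]
     = pCons 0 (W_bracket_poly a f b 1) - smult (of_int a) ([:of_int a,1:] * (f :: 'a::comm_ring_1 poly))"
proof -
  define G where "G = [:of_int b,1:] * pcompose f [:of_int b,1:]"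
  define H where "H = [:of_int a,1:] * f"
  have "pcompose [:0,1:] [:of_int a,1:] = ([:of_int a,1:] :: 'a poly)"
    by (simp add: pcompose_pCons)
  then have "W_bracket_poly a f b [:0,1:] = G * [:0,1:] - [:of_int a,1:] * H"
    unfolding W_bracket_poly_def G_def H_def by (simp only: mult.assoc)
  also have "\<dots> = (pCons 0 G - pCons 0 H) - smult (of_int a) H"
    by (simp add: mult_pCons_right mult_pCons_left)
  also have "pCons 0 G - pCons 0 H = pCons 0 (W_bracket_poly a f b 1)"
    unfolding W_bracket_poly_def G_def H_def by (simp add: pcompose_1)
  finally show ?thesis
    unfolding H_def .
qed

lemma W_bracket_poly_one_right:
  fixes f :: "'a::comm_ring_1 poly"
  assumes "degree f \<le> n"
  shows "degree (W_bracket_poly a f b 1) \<le> n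
    \<and> coeff (W_bracket_poly a f b 1) n = (of_nat (Suc n) * of_int b - of_int a) * coeff f n"
proof -
  define q where "q = pCons 0 f"
  have eq: "W_bracket_poly a f b 1 = (pcompose q [:of_int b,1:] - q) - smult (of_int a) f"
    by (simp add: W_bracket_poly_def q_def pcompose_pCons pcompose_1 mult_pCons_left algebra_simps)
  have "degree q \<le> Suc n"
    unfolding q_def using assms by (cases "f = 0") auto
  from pcompose_shift_minus_self[OF this, of "of_int b"]
  have shift: "degree (pcompose q [:of_int b,1:] - q) \<le> n"
    "coeff (pcompose q [:of_int b,1:] - q) n = of_nat (Suc n) * of_int b * coeff f n"
    by (simp_all add: q_def)
  have "degree (W_bracket_poly a f b 1) \<le> n"
    unfolding eq by (rule degree_diff_le[OF shift(1)]) (rule order_trans[OF degree_smult_le assms])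
  moreover have "coeff (W_bracket_poly a f b 1) n = (of_nat (Suc n) * of_int b - of_int a) * coeff f n"
    unfolding eq using shift(2) by (simp add: algebra_simps)
  ultimately show ?thesis ..
qed

lemma degree_W_bracket_poly_one_right:
  fixes f :: "'a::{idom, ring_char_0} poly"
  assumes "f \<noteq> 0" and "int (Suc (degree f)) * b \<noteq> a"
  shows "W_bracket_poly a f b 1 \<noteq> 0 \<and> degree (W_bracket_poly a f b 1) = degree f"
proof -
  have "(of_nat (Suc (degree f)) * of_int b - of_int a :: 'a) = of_int (int (Suc (degree f)) * b - a)"
    by simp
  with assms(2) have "(of_nat (Suc (degree f)) * of_int b - of_int a :: 'a) \<noteq> 0"
    by (simp only: of_int_eq_0_iff)
  with W_bracket_poly_one_right[of f "degree f" a b] assms(1)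
  have "degree (W_bracket_poly a f b 1) \<le> degree f" "coeff (W_bracket_poly a f b 1) (degree f) \<noteq> 0"
    by auto
  then show ?thesis
    by (auto intro: antisym le_degree)
qed

lemma poly_subspace_with_all_degrees:
  fixes P :: "'a::field poly \<Rightarrow> bool"
  assumes "P 0" and "\<And>f g. P f \<Longrightarrow> P g \<Longrightarrow> P (f + g)" and "\<And>c f. P f \<Longrightarrow> P (smult c f)"
    and "\<And>n. \<exists>f. P f \<and> f \<noteq> 0 \<and> degree f = n"
  shows "P h"
proof (induction "degree h" arbitrary: h rule: less_induct)
  case less
  show ?case
  proof (cases "h = 0")
    case True
    then show ?thesis using assms(1) by simp
  next
    case False
    obtain f where f: "P f" "f \<noteq> 0" "degree f = degree h"
      using assms(4) by blast
    define g where "g = h - smult (lead_coeff h / lead_coeff f) f"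
    have "coeff g (degree h) = 0"
      unfolding g_def using f(2,3) by (simp flip: f(3))
    moreover have "degree g \<le> degree h"
      unfolding g_def using f(3) by (intro degree_diff_le) (auto intro: order_trans[OF degree_smult_le])
    ultimately have "g = 0 \<or> degree g < degree h"
      by (metis leading_coeff_0_iff order_le_less)
    then have "P g"
      using less assms(1) by auto
    moreover have "h = g + smult (lead_coeff h / lead_coeff f) f"
      unfolding g_def by simp
    ultimately show ?thesis
      using assms(2,3) f(1) by metis
  qed
qed

text \<open>The automorphism \<open>t \<mapsto> t\<inverse>\<close> of \<open>W\<close> sends \<open>t\<^sup>i D f(D)\<close> to
  \<open>t\<^sup>-\<^sup>i D (-f(-D))\<close>.\<close>
definition inversion_poly :: "'a::comm_ring_1 poly \<Rightarrow> 'a poly" where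
  "inversion_poly f = - pcompose f [:0,-1:]"

lemma inversion_poly_inversion_poly [simp]: "inversion_poly (inversion_poly f) = f"
proof -
  have "pcompose [:0,-1:] [:0,-1::'a:] = [:0,1:]"
    by (simp add: pcompose_pCons)
  then show ?thesis
    unfolding inversion_poly_def by (simp add: pcompose_uminus pcompose_assoc[symmetric])
qed

lemma inversion_poly_add: "inversion_poly (f + g) = inversion_poly f + inversion_poly g"
  unfolding inversion_poly_def by (simp add: pcompose_add)

lemma inversion_poly_smult: "inversion_poly (smult c f) = smult c (inversion_poly f)"
  unfolding inversion_poly_def by (simp add: pcompose_smult)

lemma inversion_poly_one [simp]: "inversion_poly 1 = -1"
  unfolding inversion_poly_def by (simp add: pcompose_1)

lemma inversion_poly_X [simp]: "inversion_poly [:0,1:] = [:0,1:]"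
  unfolding inversion_poly_def by (simp add: pcompose_pCons)

lemma W_bracket_poly_inversion_poly:
  "W_bracket_poly (-i) (inversion_poly f) (-j) (inversion_poly g)
     = inversion_poly (W_bracket_poly i f j (g :: 'a::comm_ring_1 poly))"
proof -
  have shift: "pcompose [:0,-1:] [:c,1:] = ([:-c,-1:] :: 'a poly)"
    "pcompose [:c,1:] [:0,-1:] = ([:c,-1:] :: 'a poly)" for c
    by (simp_all add: pcompose_pCons)
  have "[:-c,1:] = - ([:c,-1:] :: 'a poly)" for c
    by simp
  then show ?thesis
    unfolding W_bracket_poly_def inversion_poly_def pcompose_uminus pcompose_diff pcompose_mult
      pcompose_assoc[symmetric] shift of_int_minus minus_minus
    by (simp add: algebra_simps shift)
qed

section \<open>Linear algebra\<close>

definition poly_apply :: "('a::zero \<Rightarrow> 'v \<Rightarrow> 'v) \<Rightarrow> ('v \<Rightarrow> 'v) \<Rightarrow> 'a poly \<Rightarrow> 'v \<Rightarrow> 'v::comm_monoid_add"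
  where "poly_apply scale T p u = (\<Sum>i\<le>degree p. scale (coeff p i) ((T ^^ i) u))"

context vector_space
begin

lemma span_image_lessThan_sum:
  fixes w :: "nat \<Rightarrow> 'b"
  assumes "x \<in> span (w ` {..<n})"
  shows "\<exists>c. x = (\<Sum>i<n. c i *s w i)"
  using assms
proof (induction n arbitrary: x)
  case 0
  then show ?case by simp
next
  case (Suc n)
  have "w ` {..<Suc n} = insert (w n) (w ` {..<n})"
    by (simp add: lessThan_Suc)
  then obtain k where "x - k *s w n \<in> span (w ` {..<n})"
    using Suc.prems span_breakdown_eq by auto
  then obtain c where c: "x - k *s w n = (\<Sum>i<n. c i *s w i)"
    using Suc.IH by blast
  have "(\<Sum>i<Suc n. (c(n := k)) i *s w i) = x"
    using c by (simp add: algebra_simps)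
  then show ?case
    by metis
qed

lemma dim_le_of_subset:
  assumes "S \<subseteq> X" and "X \<subseteq> span B" and "finite B"
  shows "dim S \<le> dim X"
proof -
  obtain D where D: "D \<subseteq> X" "independent D" "X \<subseteq> span D" "card D = dim X"
    by (rule basis_exists)
  have "finite D"
    using independent_span_bound[OF assms(3) D(2)] D(1) assms(2) by blast
  then show ?thesis
    using dim_le_card[of S D] assms(1) D(3,4) by auto
qed

lemma dim_less_of_psubset:
  assumes "subspace E" and "E \<subset> U" and "U \<subseteq> span B" and "finite B"
  shows "dim E < dim U"
proof -
  obtain C where C: "C \<subseteq> E" "independent C" "E \<subseteq> span C" "card C = dim E"
    by (rule basis_exists)
  obtain D where D: "C \<subseteq> D" "D \<subseteq> U" "independent D" "U \<subseteq> span D"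
    using maximal_independent_subset_extend[of C U] C(1,2) assms(2) by blast
  have "finite D"
    using independent_span_bound[OF assms(4) D(3)] D(2) assms(3) by blast
  moreover have "C \<noteq> D"
    using D(4) span_minimal[OF C(1) assms(1)] assms(2) by blast
  ultimately have "card C < card D"
    using D(1) by (simp add: psubset_card_mono)
  then show ?thesis
    using C(4) basis_card_eq_dim[OF D(2) D(4) D(3)] by simp
qed

lemma dim_le_dim_image_plus_dim_kernel:
  assumes "subspace U" and "U \<subseteq> span B" and "finite B" and T: "module_hom scale scale T"
  shows "dim U \<le> dim (T ` U) + dim {u \<in> U. T u = 0}"
proof -
  define K where "K = {u \<in> U. T u = 0}"
  obtain E where E: "E \<subseteq> T ` U" "independent E" "T ` U \<subseteq> span E" "card E = dim (T ` U)"
    by (rule basis_exists)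
  have "T ` U \<subseteq> span (T ` B)"
    using assms(2) module_hom.span_image[OF T] by blast
  then have "finite E"
    using independent_span_bound[of "T ` B" E] assms(3) E(1,2) by blast
  obtain C where C: "C \<subseteq> K" "independent C" "K \<subseteq> span C" "card C = dim K"
    by (rule basis_exists)
  have "finite C"
    using independent_span_bound[OF assms(3) C(2)] C(1) assms(2) unfolding K_def by blast
  define g where "g = inv_into U T"
  have g: "g e \<in> U" "T (g e) = e" if "e \<in> E" for e
    using E(1) that unfolding g_def by (auto intro: inv_into_into f_inv_into_f)
  have "U \<subseteq> span (g ` E \<union> C)"
  proof
    fix u assume "u \<in> U"
    moreover have "T ` g ` E = E"
      using g(2) by force
    ultimately have "T u \<in> span (T ` g ` E)"
      using E(3) by auto
    then obtain p where p: "p \<in> span (g ` E)" "T u = T p"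
      using module_hom.span_image[OF T] by blast
    have "span (g ` E) \<subseteq> U"
      using span_minimal[OF _ assms(1)] g(1) by blast
    with p \<open>u \<in> U\<close> have "u - p \<in> K"
      unfolding K_def using subspace_diff[OF assms(1)] module_hom.diff[OF T] by auto
    then have "u - p \<in> span (g ` E \<union> C)" and "p \<in> span (g ` E \<union> C)"
      using C(3) p(1) span_mono[of C "g ` E \<union> C"] span_mono[of "g ` E" "g ` E \<union> C"] by blast+
    then show "u \<in> span (g ` E \<union> C)"
      using span_add by fastforce
  qed
  then have "dim U \<le> card (g ` E \<union> C)"
    using dim_le_card \<open>finite E\<close> \<open>finite C\<close> by blast
  also have "\<dots> \<le> card E + card C"
    using card_Un_le[of "g ` E" C] card_image_le[OF \<open>finite E\<close>, of g] by linarith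
  finally show ?thesis
    using E(4) C(4) unfolding K_def by simp
qed

lemma dim_le_sum_dim_images:
  assumes "subspace U" and "U \<subseteq> span B" and "finite B"
    and "\<forall>T \<in> set Ts. module_hom scale scale T"
    and "\<And>u. u \<in> U \<Longrightarrow> \<forall>T \<in> set Ts. T u = 0 \<Longrightarrow> u = 0"
  shows "dim U \<le> (\<Sum>T \<leftarrow> Ts. dim (T ` U))"
  using assms
proof (induction Ts arbitrary: U)
  case Nil
  then have "U \<subseteq> span {}"
    by auto
  then show ?case
    using dim_le_card[of U "{}"] by simp
next
  case (Cons T Ts)
  define K where "K = {u \<in> U. T u = 0}"
  have "subspace K"
    unfolding K_def using subspace_inter[OF Cons.prems(1) module_hom.subspace_kernel[of scale scale T]]
      Cons.prems(4) by (simp add: Int_def conj_commute)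
  moreover have "K \<subseteq> span B"
    unfolding K_def using Cons.prems(2) by blast
  moreover have "u = 0" if "u \<in> K" "\<forall>T' \<in> set Ts. T' u = 0" for u
    using Cons.prems(5) that unfolding K_def by simp
  ultimately have "dim K \<le> (\<Sum>T' \<leftarrow> Ts. dim (T' ` K))"
    using Cons.IH[of K] Cons.prems(3,4) by simp
  also have "\<dots> \<le> (\<Sum>T' \<leftarrow> Ts. dim (T' ` U))"
  proof (rule sum_list_mono)
    fix T' assume "T' \<in> set Ts"
    then have "T' ` U \<subseteq> span (T' ` B)"
      using Cons.prems(2,4) module_hom.span_image[of scale scale T'] by auto
    then show "dim (T' ` K) \<le> dim (T' ` U)"
      using dim_le_of_subset[of "T' ` K" "T' ` U" "T' ` B"] Cons.prems(3) unfolding K_def by auto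
  qed
  finally show ?case
    using dim_le_dim_image_plus_dim_kernel[OF Cons.prems(1-3), of T] Cons.prems(4) unfolding K_def by simp
qed


lemma exists_in_span_of_predecessors:
  fixes w :: "nat \<Rightarrow> 'b"
  assumes "finite B" and "\<And>i. w i \<in> span B"
  shows "\<exists>n. w n \<in> span (w ` {..<n})"
proof (rule ccontr)
  assume "\<not> ?thesis"
  then have none: "w n \<notin> span (w ` {..<n})" for n
    by simp
  have indep: "independent (w ` {..<m}) \<and> inj_on w {..<m}" for m
  proof (induction m)
    case 0
    show ?case by (simp add: independent_empty)
  next
    case (Suc m)
    have "w m \<notin> w ` {..<m}"
      using none[of m] span_base[of "w m" "w ` {..<m}"] by blast
    moreover have "independent (insert (w m) (w ` {..<m}))"
      using independent_insertI[OF none[of m]] Suc.IH by blast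
    moreover have "w ` {..<Suc m} = insert (w m) (w ` {..<m})"
      by (simp add: lessThan_Suc)
    moreover have "inj_on w {..<Suc m}"
      unfolding lessThan_Suc using Suc.IH \<open>w m \<notin> w ` {..<m}\<close> by (simp add: inj_on_insert)
    ultimately show ?case
      by simp
  qed
  have "w ` {..<Suc (card B)} \<subseteq> span B"
    using assms(2) by blast
  then have "card (w ` {..<Suc (card B)}) \<le> card B"
    using independent_span_bound[OF assms(1)] indep[of "Suc (card B)"] by simp
  moreover have "card (w ` {..<Suc (card B)}) = Suc (card B)"
    using indep[of "Suc (card B)"] by (simp add: card_image)
  ultimately show False
    by simp
qed

context
  fixes T :: "'b \<Rightarrow> 'b"
  assumes T: "module_hom scale scale T"
begin

lemma module_hom_funpow: "module_hom scale scale (T ^^ i)"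
  unfolding module_hom_iff using module_axioms
  by (induction i) (simp_all add: module_hom.add[OF T] module_hom.scale[OF T])

lemma poly_apply_0 [simp]: "poly_apply scale T 0 u = 0"
  by (simp add: poly_apply_def)

lemma poly_apply_eq_sum_atMost:
  assumes "degree p \<le> N"
  shows "poly_apply scale T p u = (\<Sum>i\<le>N. coeff p i *s (T ^^ i) u)"
  unfolding poly_apply_def using assms
  by (intro sum.mono_neutral_left) (auto simp: coeff_eq_0)

lemma poly_apply_add: "poly_apply scale T (p + q) u = poly_apply scale T p u + poly_apply scale T q u"
proof -
  define N where "N = max (degree p) (degree q)"
  have "degree p \<le> N" "degree q \<le> N" "degree (p + q) \<le> N"
    unfolding N_def by (auto intro: degree_add_le)
  then show ?thesis
    by (simp add: poly_apply_eq_sum_atMost scale_left_distrib sum.distrib)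
qed

lemma poly_apply_smult: "poly_apply scale T (smult c p) u = c *s poly_apply scale T p u"
  unfolding poly_apply_eq_sum_atMost[OF degree_smult_le] poly_apply_def
  by (simp add: scale_sum_right)

lemma poly_apply_diff: "poly_apply scale T (p - q) u = poly_apply scale T p u - poly_apply scale T q u"
  using poly_apply_add[of p "smult (-1) q" u] poly_apply_smult[of "-1" q u] by (simp add: scale_minus_left)

lemma poly_apply_sum: "poly_apply scale T (sum F S) u = (\<Sum>x\<in>S. poly_apply scale T (F x) u)"
  by (induction S rule: infinite_finite_induct) (simp_all add: poly_apply_add)

lemma poly_apply_monom: "poly_apply scale T (monom c n) u = c *s (T ^^ n) u"
proof -
  have "poly_apply scale T (monom c n) u = (\<Sum>i\<le>n. if n = i then c *s (T ^^ i) u else 0)"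
    unfolding poly_apply_eq_sum_atMost[OF degree_monom_le] by (intro sum.cong) (auto simp: coeff_monom)
  then show ?thesis
    by simp
qed

lemma poly_apply_pCons_0: "poly_apply scale T (pCons 0 q) u = poly_apply scale T q (T u)"
proof -
  have "degree (pCons 0 q) \<le> Suc (degree q)"
    by (cases "q = 0") auto
  then have "poly_apply scale T (pCons 0 q) u = (\<Sum>i\<le>Suc (degree q). coeff (pCons 0 q) i *s (T ^^ i) u)"
    by (rule poly_apply_eq_sum_atMost)
  also have "\<dots> = (\<Sum>i\<le>degree q. coeff q i *s (T ^^ Suc i) u)"
    by (subst sum.atMost_Suc_shift) simp
  finally show ?thesis
    unfolding poly_apply_def by (simp add: funpow_Suc_right del: funpow.simps)
qed

lemma poly_apply_linear_factor:
  "poly_apply scale T ([:- r, 1:] * q) u = poly_apply scale T q (T u - r *s u)"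
proof -
  have "[:- r, 1:] * q = pCons 0 q + smult (- r) q"
    by (simp add: mult_pCons_left)
  then have "poly_apply scale T ([:- r, 1:] * q) u
      = poly_apply scale T q (T u) - r *s poly_apply scale T q u"
    by (simp only: poly_apply_add poly_apply_smult poly_apply_pCons_0) (simp add: scale_minus_left)
  also have "\<dots> = poly_apply scale T q (T u - r *s u)"
    unfolding poly_apply_def
    by (simp add: module_hom.diff[OF module_hom_funpow] module_hom.scale[OF module_hom_funpow]
        scale_right_diff_distrib sum_subtractf scale_sum_right mult.commute)
  finally show ?thesis .
qed

lemma exists_annihilating_poly:
  assumes "finite B" and orbit: "\<And>i. (T ^^ i) u \<in> span B"
  shows "\<exists>p. p \<noteq> 0 \<and> poly_apply scale T p u = 0"
proof -
  define w where "w i = (T ^^ i) u" for i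
  have "\<exists>n. w n \<in> span (w ` {..<n})"
    by (rule exists_in_span_of_predecessors[OF assms(1)]) (simp add: w_def orbit)
  then obtain n where "w n \<in> span (w ` {..<n})"
    by blast
  then obtain c where c: "w n = (\<Sum>i<n. c i *s w i)"
    using span_image_lessThan_sum by blast
  define p where "p = monom 1 n - (\<Sum>i<n. monom (c i) i)"
  have "coeff p n = 1"
    unfolding p_def by (simp add: coeff_sum coeff_monom)
  then have "p \<noteq> 0"
    by auto
  moreover have "poly_apply scale T p u = 0"
    unfolding p_def poly_apply_diff poly_apply_sum poly_apply_monom
    using c by (simp add: w_def)
  ultimately show ?thesis
    by blast
qed

end

end

locale alg_closed_vector_space = vector_space scale
  for scale :: "'a::alg_closed_field \<Rightarrow> 'b::ab_group_add \<Rightarrow> 'b" (infixr \<open>*s\<close> 75)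
begin

lemma exists_eigenvector_of_annihilating_poly:
  assumes T: "module_hom scale scale T" and "subspace U" and "T ` U \<subseteq> U"
  shows "p \<noteq> 0 \<Longrightarrow> u \<in> U \<Longrightarrow> u \<noteq> 0 \<Longrightarrow> poly_apply scale T p u = 0 \<Longrightarrow>
    \<exists>w\<in>U. w \<noteq> 0 \<and> (\<exists>r. T w = r *s w)"
proof (induction "degree p" arbitrary: p u rule: less_induct)
  case less
  show ?case
  proof (cases "degree p = 0")
    case True
    then obtain c where "p = [:c:]"
      by (metis degree_eq_zeroE)
    then show ?thesis
      using less.prems by (simp add: poly_apply_def)
  next
    case False
    then obtain r where "poly p r = 0"
      using alg_closed_imp_poly_has_root by blast
    then obtain q where pq: "p = [:- r, 1:] * q"
      by (metis dvdE poly_eq_0_iff_dvd)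
    with less.prems(1) have "q \<noteq> 0"
      by auto
    then have "degree q < degree p"
      unfolding pq by (subst degree_mult_eq) auto
    define w where "w = T u - r *s u"
    have "w \<in> U"
      unfolding w_def using assms(2,3) less.prems(2) by (auto intro!: subspace_diff subspace_scale)
    moreover have "poly_apply scale T q w = 0"
      using less.prems(4) unfolding pq w_def poly_apply_linear_factor[OF T] .
    ultimately show ?thesis
      using less.hyps[OF \<open>degree q < degree p\<close> \<open>q \<noteq> 0\<close>] less.prems(2,3)
      by (cases "w = 0") (auto simp: w_def)
  qed
qed

lemma exists_eigenvector:
  assumes T: "module_hom scale scale T" and "subspace U" and "T ` U \<subseteq> U"
    and "U \<subseteq> span B" and "finite B" and "u \<in> U" and "u \<noteq> 0"
  shows "\<exists>w\<in>U. w \<noteq> 0 \<and> (\<exists>r. T w = r *s w)"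
proof -
  have "(T ^^ i) u \<in> U" for i
    by (induction i) (use assms(3,6) in auto)
  then obtain p where "p \<noteq> 0" "poly_apply scale T p u = 0"
    using exists_annihilating_poly[OF T assms(5)] assms(4) by blast
  then show ?thesis
    using exists_eigenvector_of_annihilating_poly[OF T assms(2,3)] assms(6,7) by blast
qed

lemma exists_common_eigenvector:
  fixes A :: "'c \<Rightarrow> 'b \<Rightarrow> 'b"
  assumes hom: "\<And>f. module_hom scale scale (A f)"
    and comm: "\<And>f g x. A f (A g x) = A g (A f x)"
    and "finite B"
  shows "subspace U \<Longrightarrow> U \<subseteq> span B \<Longrightarrow> (\<And>f. A f ` U \<subseteq> U) \<Longrightarrow> U \<noteq> {0} \<Longrightarrow>
    \<exists>u\<in>U. u \<noteq> 0 \<and> (\<forall>f. \<exists>c. A f u = c *s u)"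
proof (induction "dim U" arbitrary: U rule: less_induct)
  case less
  obtain u0 where u0: "u0 \<in> U" "u0 \<noteq> 0"
    using less.prems(1,4) subspace_0 by blast
  show ?case
  proof (cases "\<forall>f. \<exists>c. \<forall>x\<in>U. A f x = c *s x")
    case True
    then show ?thesis
      using u0 by blast
  next
    case False
    then obtain f where not_scalar: "\<not> (\<exists>c. \<forall>x\<in>U. A f x = c *s x)"
      by blast
    obtain u1 r where u1: "u1 \<in> U" "u1 \<noteq> 0" "A f u1 = r *s u1"
      using exists_eigenvector[OF hom less.prems(1,3,2) assms(3) u0] by blast
    define E where "E = {x \<in> U. A f x = r *s x}"
    have "subspace E"
      unfolding E_def subspace_def using less.prems(1)
      by (auto simp: subspace_add subspace_scale subspace_0 scale_right_distrib mult.commute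
          module_hom.add[OF hom] module_hom.scale[OF hom] module_hom.zero[OF hom])
    moreover have "E \<subset> U"
      using not_scalar unfolding E_def by blast
    moreover have "A g ` E \<subseteq> E" for g
      using less.prems(3)[of g] comm[of f g] module_hom.scale[OF hom] unfolding E_def by auto
    moreover have "E \<noteq> {0}"
      using u1 unfolding E_def by auto
    ultimately show ?thesis
      using less.hyps[of E] dim_less_of_psubset[OF _ _ less.prems(2) assms(3)] less.prems(2)
      by (metis (no_types, lifting) psubsetE subset_trans subsetD)
  qed
qed

end

section \<open>Graded \<open>W\<close>-modules with finite-dimensional pieces\<close>

lemma nat_sets_eventually_UNIV:
  fixes S :: "nat \<Rightarrow> nat set"
  assumes "finite (- S 0)" and "\<And>r. 0 \<in> S (Suc r)"
    and "\<And>r n. n \<in> S r \<Longrightarrow> n \<in> S (Suc r) \<and> Suc n \<in> S (Suc r)"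
  shows "\<exists>r. S r = UNIV"
proof -
  have missing: "r \<le> n \<and> n \<notin> S 0" if "n \<notin> S r" for r n
    using that
  proof (induction r arbitrary: n)
    case 0
    then show ?case by simp
  next
    case (Suc r)
    then obtain m where "n = Suc m"
      using assms(2) by (cases n) auto
    with Suc.prems assms(3)[of m r] assms(3)[of n r] Suc.IH show ?case
      by auto
  qed
  obtain M where "\<forall>n \<in> - S 0. n < M"
    using assms(1) finite_nat_set_iff_bounded by blast
  then have "n \<in> S M" for n
    using missing[where r = M and n = n] by (metis ComplI leD)
  then have "S M = UNIV"
    by blast
  then show ?thesis ..
qed

definition annihilator_degrees :: "(int \<Rightarrow> 'a::zero poly \<Rightarrow> 'v \<Rightarrow> 'v::zero) \<Rightarrow> int \<Rightarrow> 'v \<Rightarrow> nat set"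
  where "annihilator_degrees rho l v = {n. \<exists>f. f \<noteq> 0 \<and> degree f = n \<and> rho l f v = 0}"

locale graded_W_module =
  fixes scale :: "'a::field_char_0 \<Rightarrow> 'v::ab_group_add \<Rightarrow> 'v"
    and rho :: "int \<Rightarrow> 'a poly \<Rightarrow> 'v \<Rightarrow> 'v"
    and Vg :: "int \<Rightarrow> 'v set"
  assumes W_module: "W_module scale rho"
    and fin_dim_Vg: "fin_dim_subspace scale (Vg j)"
    and rho_Vg: "v \<in> Vg j \<Longrightarrow> rho i f v \<in> Vg (i + j)"
begin

sublocale V: vector_space scale
  using W_module unfolding W_module_def by blast

lemma module_hom_rho: "module_hom scale scale (rho i f)"
  using W_module unfolding W_module_def by (simp add: module_hom_iff V.module_axioms)

lemma rho_zero [simp]: "rho i f 0 = 0"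
  using module_hom.zero[OF module_hom_rho] .

lemma rho_diff: "rho i f (x - y) = rho i f x - rho i f y"
  using module_hom.diff[OF module_hom_rho] .

lemma rho_add_poly: "rho i (f + g) v = rho i f v + rho i g v"
  using W_module unfolding W_module_def by blast

lemma rho_smult: "rho i (smult c f) v = scale c (rho i f v)"
  using W_module unfolding W_module_def by blast

lemma rho_zero_poly [simp]: "rho i 0 v = 0"
  using rho_smult[of i 0 0 v] by simp

lemma rho_uminus_poly: "rho i (- f) v = - rho i f v"
  using rho_smult[of i "-1" f v] by (simp add: V.scale_minus_left)

lemma rho_commutator:
  "rho i f (rho j g v) = rho j g (rho i f v) + rho (i + j) (W_bracket_poly i f j g) v"
  using W_module unfolding W_module_def by (metis diff_eq_eq add.commute)

lemma rho_bracket_eq_0: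
  assumes "rho a f v = 0" and "rho b g v = 0"
  shows "rho (a + b) (W_bracket_poly a f b g) v = 0"
  using rho_commutator[of a f b g v] assms by simp

lemma subspace_Vg: "V.subspace (Vg j)"
  using fin_dim_Vg unfolding fin_dim_subspace_def by blast

lemma finite_basis_Vg:
  obtains B where "finite B" "B \<subseteq> Vg j" "V.span B = Vg j"
  using fin_dim_Vg unfolding fin_dim_subspace_def by blast



lemma rho_one_sum_eq_0:
  assumes "rho a 1 v = 0" and "rho b 1 v = 0" and "a \<noteq> b"
  shows "rho (a + b) 1 v = 0"
proof -
  have "rho (a + b) (W_bracket_poly a 1 b 1) v = 0"
    using rho_bracket_eq_0[OF assms(1,2)] .
  then have "scale (of_int (b - a)) (rho (a + b) 1 v) = 0"
    by (simp only: W_bracket_poly_one_one rho_smult)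
  then show ?thesis
    using assms(3) by simp
qed

text \<open>Adding \<open>k\<close> or \<open>k + 1\<close> to an index \<open>r k + t\<close> with \<open>1 \<le> t < r\<close> (never an equal
  one) reaches every \<open>(r + 1) k + t\<close> with \<open>1 \<le> t \<le> r\<close>.\<close>
lemma rho_one_eq_0_layer:
  assumes k: "k \<ge> 1" and "rho k 1 v = 0" and "rho (k + 1) 1 v = 0" and "r \<ge> 2"
  shows "\<forall>t. 1 \<le> t \<and> t \<le> r - 1 \<longrightarrow> rho (r * k + t) 1 v = 0"
  using assms(4)
proof (induction r rule: int_ge_induct)
  case base
  show ?case
    using rho_one_sum_eq_0[OF assms(2,3)] by (auto simp: algebra_simps)
next
  case (step r)
  have "r * k \<ge> 2 * k"
    using step.hyps k by (intro mult_right_mono) auto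
  show ?case
  proof (intro allI impI)
    fix t assume t: "1 \<le> t \<and> t \<le> r + 1 - 1"
    show "rho ((r + 1) * k + t) 1 v = 0"
    proof (cases "t \<le> r - 1")
      case True
      have "k \<noteq> r * k + t"
        using t \<open>r * k \<ge> 2 * k\<close> k by linarith
      then have "rho (k + (r * k + t)) 1 v = 0"
        using rho_one_sum_eq_0[OF assms(2)] step.IH t True by auto
      then show ?thesis
        by (simp add: algebra_simps)
    next
      case False
      have "k + 1 \<noteq> r * k + (r - 1)"
        using step.hyps \<open>r * k \<ge> 2 * k\<close> k by linarith
      moreover have "rho (r * k + (r - 1)) 1 v = 0"
        using step.IH step.hyps by auto
      ultimately have "rho ((k + 1) + (r * k + (r - 1))) 1 v = 0"
        using rho_one_sum_eq_0[OF assms(3)] by blast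
      moreover have "t = r"
        using False t by simp
      ultimately show ?thesis
        by (simp add: algebra_simps)
    qed
  qed
qed

lemma rho_one_eq_0_beyond:
  assumes k: "k \<ge> 1" and "rho k 1 v = 0" and "rho (k + 1) 1 v = 0" and l: "l \<ge> k * k + k + 1"
  shows "rho l 1 v = 0"
proof -
  define r where "r = (l - 1) div k"
  define t where "t = (l - 1) mod k + 1"
  have "l = r * k + t" "1 \<le> t"
    using k unfolding r_def t_def by (auto simp: algebra_simps)
  moreover have "t \<le> k"
    unfolding t_def using pos_mod_bound[of k "l - 1"] k by linarith
  moreover have "r > k"
  proof -
    have "r * k > k * k"
      using \<open>l = r * k + t\<close> \<open>t \<le> k\<close> l by linarith
    then show ?thesis
      using k by (simp add: mult_less_cancel_right)
  qed
  ultimately show ?thesis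
    using rho_one_eq_0_layer[OF assms(1-3), of r] k by auto
qed

lemma rho_X_eq_0_beyond:
  assumes "a \<ge> 1" and one: "\<And>l. l \<ge> B \<Longrightarrow> rho l 1 v = 0" and "rho a [:0,1:] v = 0"
    and "l \<ge> a + B" and "l \<ge> 2 * a"
  shows "rho l [:0,1:] v = 0"
proof -
  define b where "b = l - a"
  have "rho l (W_bracket_poly a [:0,1:] b 1) v = 0"
    using rho_bracket_eq_0[OF assms(3) one[of b]] assms(4) unfolding b_def by simp
  then have "scale (of_int b ^ 2) (rho l 1 v) + scale (of_int (2 * b - a)) (rho l [:0,1:] v) = 0"
    by (simp only: W_bracket_poly_X_one rho_add_poly rho_smult)
  then have "scale (of_int (2 * b - a)) (rho l [:0,1:] v) = 0"
    using one[of l] assms(1,4) by simp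
  moreover have "(of_int (2 * b - a) :: 'a) \<noteq> 0"
    using assms(1,5) unfolding b_def of_int_eq_0_iff by presburger
  ultimately show ?thesis
    by (metis V.scale_eq_0_iff)
qed


lemma rho_eq_0_if_annihilator_degrees_UNIV:
  assumes "annihilator_degrees rho l v = UNIV"
  shows "rho l h v = 0"
proof (rule poly_subspace_with_all_degrees[where P = "\<lambda>f. rho l f v = 0"])
  show "\<exists>f. rho l f v = 0 \<and> f \<noteq> 0 \<and> degree f = n" for n
    using assms unfolding annihilator_degrees_def by blast
qed (simp_all add: rho_add_poly rho_smult)

lemma degree_in_annihilator_degrees_shift:
  assumes "rho a f v = 0" and "f \<noteq> 0" and "rho b 1 v = 0" and "int (Suc (degree f)) * b \<noteq> a"
  shows "degree f \<in> annihilator_degrees rho (a + b) v"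
  using rho_bracket_eq_0[OF assms(1,3)] degree_W_bracket_poly_one_right[OF assms(2,4)]
  unfolding annihilator_degrees_def by blast

lemma annihilator_degrees_step:
  assumes "rho b 1 v = 0" and "rho b [:0,1:] v = 0" and "b > 2 * a" and "a \<ge> 0"
    and "n \<in> annihilator_degrees rho a v"
  shows "n \<in> annihilator_degrees rho (a + b) v \<and> Suc n \<in> annihilator_degrees rho (a + b) v"
proof
  obtain f where f: "rho a f v = 0" "f \<noteq> 0" "degree f = n"
    using assms(5) unfolding annihilator_degrees_def by blast
  have "int (Suc n) * b \<ge> b"
    using assms(3,4) by (simp add: mult_le_cancel_right1)
  then have "int (Suc (degree f)) * b \<noteq> a"
    unfolding f(3) using assms(3,4) by linarith
  then show "n \<in> annihilator_degrees rho (a + b) v"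
    using degree_in_annihilator_degrees_shift[OF f(1,2) assms(1)] f(3) by simp
  define M where "M = W_bracket_poly a f b [:0,1:]"
  have "rho (a + b) M v = 0"
    unfolding M_def by (rule rho_bracket_eq_0[OF f(1) assms(2)])
  have "degree M \<le> Suc n"
    using W_bracket_poly_one_right[of f n a b] degree_mult_le[of "[:of_int a,1:]" f] f(3)
    unfolding M_def W_bracket_poly_X_right
    by (auto intro!: degree_diff_le order_trans[OF degree_smult_le] simp: degree_pCons_le)
  have "coeff M (Suc n) = of_int (int (Suc n) * b - 2 * a) * coeff f n"
    using W_bracket_poly_one_right[of f n a b] f(3)
    unfolding M_def W_bracket_poly_X_right by (simp add: coeff_eq_0 mult_pCons_left algebra_simps)
  moreover have "(of_int (int (Suc n) * b - 2 * a) :: 'a) \<noteq> 0"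
    using \<open>int (Suc n) * b \<ge> b\<close> assms(3) unfolding of_int_eq_0_iff by linarith
  moreover have "coeff f n \<noteq> 0"
    using f(2,3) by (metis leading_coeff_0_iff)
  ultimately have "coeff M (Suc n) \<noteq> 0"
    by simp
  with \<open>degree M \<le> Suc n\<close> have "M \<noteq> 0" "degree M = Suc n"
    by (auto intro: antisym le_degree)
  with \<open>rho (a + b) M v = 0\<close> show "Suc n \<in> annihilator_degrees rho (a + b) v"
    unfolding annihilator_degrees_def by blast
qed

lemma missing_degrees_independent:
  assumes "finite S" and "S \<inter> annihilator_degrees rho a v = {}"
    and "(\<Sum>n\<in>S. scale (c n) (rho a (monom 1 n) v)) = 0"
  shows "\<forall>n\<in>S. c n = 0"
proof -
  define p where "p = (\<Sum>n\<in>S. monom (c n) n)"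
  have monom: "rho a (monom (c n) n) v = scale (c n) (rho a (monom 1 n) v)" for n
    using rho_smult[of a "c n" "monom 1 n" v] by (simp add: smult_monom)
  have "rho a p v = (\<Sum>n\<in>S. rho a (monom (c n) n) v)"
    unfolding p_def by (induction S rule: infinite_finite_induct) (simp_all add: rho_add_poly)
  then have "rho a p v = 0"
    using assms(3) by (simp add: monom)
  have coeff_p: "coeff p m = (if m \<in> S then c m else 0)" for m
    unfolding p_def using assms(1) by (simp add: coeff_sum coeff_monom)
  have "p = 0"
  proof (rule ccontr)
    assume "p \<noteq> 0"
    then have "coeff p (degree p) \<noteq> 0"
      by simp
    then have "degree p \<in> S"
      using coeff_p[of "degree p"] by (auto split: if_splits)
    moreover have "degree p \<in> annihilator_degrees rho a v"
      using \<open>p \<noteq> 0\<close> \<open>rho a p v = 0\<close> unfolding annihilator_degrees_def by blast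
    ultimately show False
      using assms(2) by blast
  qed
  then show ?thesis
    using coeff_p by (metis coeff_0)
qed

lemma independent_missing_degree_images:
  "V.independent ((\<lambda>n. rho a (monom 1 n) v) ` (- annihilator_degrees rho a v))
    \<and> inj_on (\<lambda>n. rho a (monom 1 n) v) (- annihilator_degrees rho a v)"
proof
  define Mis where "Mis = - annihilator_degrees rho a v"
  define e where "e n = rho a (monom 1 n) v" for n
  have indep: "\<forall>n\<in>S. c n = 0"
    if "finite S" "S \<subseteq> Mis" "(\<Sum>n\<in>S. scale (c n) (e n)) = 0" for S c
    using missing_degrees_independent[of S a v c] that unfolding Mis_def e_def by blast
  show "inj_on e Mis"
  proof (rule inj_onI, rule ccontr)
    fix n m assume "n \<in> Mis" "m \<in> Mis" "e n = e m" "n \<noteq> m"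
    then have "(\<Sum>i\<in>{n,m}. scale (if i = n then 1 else -1) (e i)) = 0"
      by (simp add: V.scale_minus_left)
    then show False
      using indep[of "{n,m}" "\<lambda>i. if i = n then 1 else -1"] \<open>n \<in> Mis\<close> \<open>m \<in> Mis\<close> by auto
  qed
  show "V.independent (e ` Mis)"
    unfolding V.independent_explicit_finite_subsets
  proof (intro allI impI ballI)
    fix T u w assume T: "T \<subseteq> e ` Mis" "finite T" and "(\<Sum>x\<in>T. scale (u x) x) = 0" and "w \<in> T"
    obtain S where S: "S \<subseteq> Mis" "T = e ` S"
      using T(1) by (auto simp: subset_image_iff)
    with \<open>inj_on e Mis\<close> have "inj_on e S" "finite S"
      using T(2) inj_on_subset finite_image_iff by blast+
    with \<open>(\<Sum>x\<in>T. scale (u x) x) = 0\<close> have "(\<Sum>n\<in>S. scale (u (e n)) (e n)) = 0"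
      unfolding S(2) by (simp add: sum.reindex)
    then have "\<forall>n\<in>S. u (e n) = 0"
      by (rule indep[OF \<open>finite S\<close> S(1)])
    then show "u w = 0"
      using \<open>w \<in> T\<close> S(2) by auto
  qed
qed

lemma finite_missing_degrees:
  assumes "v \<in> Vg j"
  shows "finite (- annihilator_degrees rho a v)"
proof -
  define e where "e n = rho a (monom 1 n) v" for n
  obtain B where "finite B" "V.span B = Vg (a + j)"
    using finite_basis_Vg by metis
  moreover have "e ` (- annihilator_degrees rho a v) \<subseteq> Vg (a + j)"
    unfolding e_def using rho_Vg[OF assms] by blast
  ultimately have "finite (e ` (- annihilator_degrees rho a v))"
    using V.independent_span_bound[of B] independent_missing_degree_images[of a v]
    unfolding e_def by simp
  then show ?thesis
    using independent_missing_degree_images[of a v] unfolding e_def by (simp add: finite_image_iff)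
qed

lemma exists_annihilating_level:
  assumes "v \<in> Vg j" and "a0 \<ge> 0"
    and one: "\<And>l. l \<ge> a0 \<Longrightarrow> rho l 1 v = 0" and X: "\<And>l. l \<ge> a0 \<Longrightarrow> rho l [:0,1:] v = 0"
  shows "\<exists>a\<ge>a0. \<forall>f. rho a f v = 0"
proof -
  define A where "A r = ((\<lambda>a. 3 * a + 1) ^^ r) a0" for r
  have A_ge: "A r \<ge> a0" for r
    unfolding A_def by (induction r) (use assms(2) in auto)
  have A_Suc: "A (Suc r) = A r + (2 * A r + 1)" for r
    unfolding A_def by simp
  have "\<exists>r. annihilator_degrees rho (A r) v = UNIV"
  proof (rule nat_sets_eventually_UNIV)
    show "finite (- annihilator_degrees rho (A 0) v)"
      by (rule finite_missing_degrees[OF assms(1)])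
    show "0 \<in> annihilator_degrees rho (A (Suc r)) v" for r
      using one[OF A_ge[of "Suc r"]] unfolding annihilator_degrees_def
      by (intro CollectI exI[of _ 1]) simp
    show "n \<in> annihilator_degrees rho (A (Suc r)) v \<and> Suc n \<in> annihilator_degrees rho (A (Suc r)) v"
      if "n \<in> annihilator_degrees rho (A r) v" for r n
      unfolding A_Suc using A_ge[of r] assms(2)
      by (intro annihilator_degrees_step[OF _ _ _ _ that] one X) auto
  qed
  then show ?thesis
    using rho_eq_0_if_annihilator_degrees_UNIV A_ge by blast
qed

definition eventually_annihilated :: "'v \<Rightarrow> bool" where
  "eventually_annihilated v \<longleftrightarrow> (\<exists>N. \<forall>l\<ge>N. \<forall>f. rho l f v = 0)"

lemma eventually_annihilated_if_annihilating_level: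
  assumes "\<forall>f. rho a f v = 0" and "a \<ge> 0" and one: "\<And>l. l \<ge> B \<Longrightarrow> rho l 1 v = 0"
  shows "eventually_annihilated v"
  unfolding eventually_annihilated_def
proof (intro exI allI impI)
  fix l h assume l: "max (2 * a + 1) (a + B) \<le> l"
  have "n \<in> annihilator_degrees rho l v" for n
  proof -
    have "int (Suc n) * (l - a) \<ge> l - a"
      using l assms(2) by (simp add: mult_le_cancel_right1)
    then have "int (Suc (degree (monom (1::'a) n))) * (l - a) \<noteq> a"
      using l by (simp add: degree_monom_eq)
    from degree_in_annihilator_degrees_shift[OF spec[OF assms(1)] _ one this] l
    show ?thesis
      by (simp add: degree_monom_eq)
  qed
  then show "rho l h v = 0"
    using rho_eq_0_if_annihilator_degrees_UNIV by blast
qed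

lemma eventually_annihilated_if_kernel_triple:
  assumes "k \<ge> 1" and "a \<ge> 1" and "v \<in> Vg j"
    and "rho k 1 v = 0" and "rho (k + 1) 1 v = 0" and "rho a [:0,1:] v = 0"
  shows "eventually_annihilated v"
proof -
  define B where "B = k * k + k + 1"
  have "B \<ge> 0"
    unfolding B_def using assms(1) by (simp add: add_increasing)
  have one: "rho l 1 v = 0" if "l \<ge> B" for l
    using rho_one_eq_0_beyond[OF assms(1,4,5)] that unfolding B_def by blast
  have X: "rho l [:0,1:] v = 0" if "l \<ge> 2 * a + B" for l
    using that \<open>B \<ge> 0\<close> assms(2)
    by (intro rho_X_eq_0_beyond[of a B v, OF assms(2) one assms(6)]) linarith+
  obtain a' where "a' \<ge> 2 * a + B" "\<forall>f. rho a' f v = 0"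
    using exists_annihilating_level[OF assms(3), of "2 * a + B"] one X \<open>B \<ge> 0\<close> assms(2) by auto
  moreover have "a' \<ge> 0"
    using \<open>a' \<ge> 2 * a + B\<close> \<open>B \<ge> 0\<close> assms(2) by linarith
  ultimately show ?thesis
    using eventually_annihilated_if_annihilating_level[of a' v B] one by blast
qed


lemma subspace_eventually_annihilated: "V.subspace {u. eventually_annihilated u}"
  unfolding V.subspace_def eventually_annihilated_def
proof (intro conjI ballI allI; clarsimp)
  fix x y N1 N2
  assume "\<forall>l\<ge>N1. \<forall>f. rho l f x = 0" and "\<forall>l\<ge>N2. \<forall>f. rho l f y = 0"
  then have "\<forall>l\<ge>max N1 N2. \<forall>f. rho l f (x + y) = 0"
    by (simp add: module_hom.add[OF module_hom_rho])
  then show "\<exists>N. \<forall>l\<ge>N. \<forall>f. rho l f (x + y) = 0" ..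
next
  fix c x N
  assume "\<forall>l\<ge>N. \<forall>f. rho l f x = 0"
  then show "\<exists>N. \<forall>l\<ge>N. \<forall>f. rho l f (scale c x) = 0"
    by (auto simp: module_hom.scale[OF module_hom_rho])
qed

lemma eventually_annihilated_rho:
  assumes "eventually_annihilated u"
  shows "eventually_annihilated (rho i f u)"
proof -
  obtain N where N: "\<forall>l\<ge>N. \<forall>f. rho l f u = 0"
    using assms unfolding eventually_annihilated_def by blast
  have "rho l g (rho i f u) = 0" if "l \<ge> N + \<bar>i\<bar>" for l g
    using rho_commutator[of l g i f u] N that by simp
  then show ?thesis
    unfolding eventually_annihilated_def by blast
qed

lemma uniformly_annihilated:
  assumes "\<And>u. eventually_annihilated u"
  shows "\<exists>N. \<forall>l\<ge>N. \<forall>f. \<forall>w\<in>Vg j. rho l f w = 0"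
proof -
  obtain B where B: "finite B" "V.span B = Vg j"
    using finite_basis_Vg by metis
  obtain N where N: "\<forall>l\<ge>N u. \<forall>f. rho l f u = 0" for u
    using assms unfolding eventually_annihilated_def by metis
  have "\<forall>w\<in>Vg j. rho l f w = 0" if "l \<ge> Max (insert 0 (N ` B))" for l f
  proof -
    have "B \<subseteq> {x. rho l f x = 0}"
      using N that B(1) by (auto intro: order_trans[OF Max_ge])
    then have "V.span B \<subseteq> {x. rho l f x = 0}"
      using V.span_minimal module_hom.subspace_kernel[OF module_hom_rho] by blast
    then show ?thesis
      using B(2) by blast
  qed
  then show ?thesis
    by blast
qed

lemma highest_weight_vector_if_shift_annihilated:
  assumes "t \<in> Vg m" and "t \<noteq> 0" and "q \<ge> 1"
    and "\<And>p. p \<ge> q \<Longrightarrow> rho p 1 t = 0" and "\<And>p w. p \<ge> q \<Longrightarrow> w \<in> Vg (m - q) \<Longrightarrow> rho p 1 w = 0"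
  shows "highest_weight_vector scale rho Vg t"
proof -
  have "rho l h t = 0" if "l \<ge> 0" for l h
  proof (rule rho_eq_0_if_annihilator_degrees_UNIV)
    define p where "p = l + q"
    have "l - p + m = m - q"
      unfolding p_def by simp
    then have "rho (l - p) g t \<in> Vg (m - q)" for g
      using rho_Vg[OF assms(1), of "l - p" g] by simp
    then have "rho l (W_bracket_poly (l - p) g p 1) t = 0" for g
      using rho_commutator[of p 1 "l - p" g t] assms(4,5) that W_bracket_poly_antisym[of p 1 "l - p" g]
      unfolding p_def by (simp add: rho_uminus_poly)
    moreover have "int (Suc n) * p \<noteq> l - p" for n
    proof -
      have "int (Suc n) * p \<ge> p"
        using that assms(3) unfolding p_def by (simp add: mult_le_cancel_right1)
      then show ?thesis
        using that assms(3) unfolding p_def by linarith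
    qed
    ultimately show "annihilator_degrees rho l t = UNIV"
      using degree_W_bracket_poly_one_right[of "monom 1 _" p "l - p"]
      unfolding annihilator_degrees_def by (fastforce simp: degree_monom_eq)
  qed
  then show ?thesis
    unfolding highest_weight_vector_def using assms(1,2) by (auto intro: exI[of _ 0])
qed

end

section \<open>Irreducible modules without highest weight vectors\<close>

locale W_module_without_hwv = graded_W_module scale rho Vg
  for scale :: "'a::{alg_closed_field, field_char_0} \<Rightarrow> 'v::ab_group_add \<Rightarrow> 'v"
    and rho :: "int \<Rightarrow> 'a poly \<Rightarrow> 'v \<Rightarrow> 'v"
    and Vg :: "int \<Rightarrow> 'v set" +
  assumes irreducible: "W_irreducible scale rho"
    and no_hwv: "\<nexists>v. highest_weight_vector scale rho Vg v"
begin

sublocale V: alg_closed_vector_space scale ..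

lemma eventually_annihilated_all:
  assumes "eventually_annihilated v" and "v \<noteq> 0"
  shows "eventually_annihilated u"
proof -
  have "{u. eventually_annihilated u} = {0} \<or> {u. eventually_annihilated u} = UNIV"
    using irreducible subspace_eventually_annihilated eventually_annihilated_rho
    unfolding W_irreducible_def by simp
  then show ?thesis
    using assms by auto
qed

lemma exists_positive_nonannihilating:
  assumes "t \<in> Vg m" and "t \<noteq> 0"
  obtains l f where "l \<ge> 1" and "rho l f t \<noteq> 0"
proof (rule ccontr)
  assume "\<not> thesis"
  define S where "S = {u \<in> Vg m. \<forall>l\<ge>1. \<forall>f. rho l f u = 0}"
  have "t \<in> S"
    using \<open>\<not> thesis\<close> that assms(1) unfolding S_def by blast
  obtain B where B: "finite B" "V.span B = Vg m"
    using finite_basis_Vg by metis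
  have "V.subspace S"
    unfolding S_def V.subspace_def using subspace_Vg[of m]
    by (auto simp: V.subspace_add V.subspace_scale V.subspace_0
        module_hom.add[OF module_hom_rho] module_hom.scale[OF module_hom_rho])
  moreover have "S \<subseteq> V.span B"
    unfolding S_def using B(2) by blast
  moreover have "rho 0 f ` S \<subseteq> S" for f
  proof
    fix y assume "y \<in> rho 0 f ` S"
    then obtain u where "u \<in> S" "y = rho 0 f u"
      by blast
    moreover have "rho l g (rho 0 f u) = 0" if "l \<ge> 1" "u \<in> S" for l g
      using rho_commutator[of l g 0 f u] that unfolding S_def by simp
    ultimately show "y \<in> S"
      using rho_Vg[of u m 0 f] unfolding S_def by auto
  qed
  moreover have "S \<noteq> {0}"
    using \<open>t \<in> S\<close> assms(2) by blast
  moreover have "rho 0 f (rho 0 g x) = rho 0 g (rho 0 f x)" for f g x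
    using rho_commutator[of 0 f 0 g x] by (simp add: W_bracket_poly_zero_zero)
  ultimately obtain u where "u \<in> S" "u \<noteq> 0" "\<forall>f. \<exists>c. rho 0 f u = scale c u"
    using V.exists_common_eigenvector[of "\<lambda>f. rho 0 f" B S, OF module_hom_rho _ B(1)] by blast
  then have "highest_weight_vector scale rho Vg u"
    unfolding highest_weight_vector_def S_def by auto
  then show False
    using no_hwv by blast
qed

lemma exists_higher_annihilated:
  assumes "t \<in> Vg m" and "t \<noteq> 0" and "\<forall>l\<ge>N. \<forall>f. rho l f t = 0"
  shows "\<exists>t' m'. t' \<in> Vg m' \<and> t' \<noteq> 0 \<and> m' > m \<and> (\<forall>l\<ge>N. \<forall>f. rho l f t' = 0)"
proof -
  obtain l f where "l \<ge> 1" "rho l f t \<noteq> 0"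
    using exists_positive_nonannihilating[OF assms(1,2)] .
  moreover have "rho l' g (rho l f t) = 0" if "l' \<ge> N" for l' g
    using rho_commutator[of l' g l f t] assms(3) that \<open>l \<ge> 1\<close> by simp
  ultimately show ?thesis
    using rho_Vg[OF assms(1), of l f] by (intro exI[of _ "rho l f t"] exI[of _ "l + m"]) auto
qed

lemma not_eventually_annihilated:
  assumes "v \<in> Vg j" and "v \<noteq> 0"
  shows "\<not> eventually_annihilated v"
proof
  assume "eventually_annihilated v"
  then obtain N where N: "\<forall>l\<ge>N. \<forall>f. rho l f v = 0"
    unfolding eventually_annihilated_def by blast
  obtain N0 where N0: "\<forall>l\<ge>N0. \<forall>f. \<forall>w\<in>Vg j. rho l f w = 0"
    using uniformly_annihilated eventually_annihilated_all[OF \<open>eventually_annihilated v\<close> assms(2)] by blast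
  have climb: "\<exists>t m. t \<in> Vg m \<and> t \<noteq> 0 \<and> m \<ge> j + int r \<and> (\<forall>l\<ge>N. \<forall>f. rho l f t = 0)" for r
  proof (induction r)
    case 0
    show ?case
      using assms N by auto
  next
    case (Suc r)
    then show ?case
      using exists_higher_annihilated by fastforce
  qed
  define M where "M = max 1 (max N N0)"
  have M: "M \<ge> 1" "M \<ge> N" "M \<ge> N0" "int (nat M) = M"
    unfolding M_def by auto
  obtain t m where t: "t \<in> Vg m" "t \<noteq> 0" "m \<ge> j + M" "\<forall>l\<ge>N. \<forall>f. rho l f t = 0"
    using climb[of "nat M"] M(4) by auto
  have "highest_weight_vector scale rho Vg t"
  proof (rule highest_weight_vector_if_shift_annihilated[OF t(1,2), of "m - j"])
    show "m - j \<ge> 1"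
      using t(3) M by simp
    show "rho p 1 t = 0" if "p \<ge> m - j" for p
      using t(3,4) M that by auto
    show "rho p 1 w = 0" if "p \<ge> m - j" and "w \<in> Vg (m - (m - j))" for p w
      using N0 t(3) M that by auto
  qed
  then show False
    using no_hwv by blast
qed

lemma kernel_triple_eq_0:
  assumes "k \<ge> 1" and "a \<ge> 1" and "v \<in> Vg j"
    and "rho k 1 v = 0" and "rho (k + 1) 1 v = 0" and "rho a [:0,1:] v = 0"
  shows "v = 0"
  using not_eventually_annihilated[OF assms(3)] eventually_annihilated_if_kernel_triple[OF assms] by blast

end

section \<open>The inversion \<open>t \<mapsto> t\<inverse>\<close> and the main theorem\<close>

definition inverted_action :: "(int \<Rightarrow> 'a::comm_ring_1 poly \<Rightarrow> 'v \<Rightarrow> 'v) \<Rightarrow> int \<Rightarrow> 'a poly \<Rightarrow> 'v \<Rightarrow> 'v"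
  where "inverted_action rho i f = rho (- i) (inversion_poly f)"

lemma W_module_inverted_action:
  assumes "W_module scale rho"
  shows "W_module scale (inverted_action rho)"
  using assms unfolding W_module_def inverted_action_def
  by (simp add: inversion_poly_add inversion_poly_smult W_bracket_poly_inversion_poly[symmetric])

lemma W_irreducible_inverted_action:
  assumes "W_irreducible scale rho"
  shows "W_irreducible scale (inverted_action rho)"
proof -
  have "rho i f u = inverted_action rho (- i) (inversion_poly f) u" for i f u
    by (simp add: inverted_action_def)
  then show ?thesis
    using assms unfolding W_irreducible_def by metis
qed

lemma highest_weight_vector_inverted_action:
  "highest_weight_vector scale (inverted_action rho) (\<lambda>j. Vg (- j)) v
     \<longleftrightarrow> lowest_weight_vector scale rho Vg v"
proof -
  have "(\<forall>f. \<exists>c. inverted_action rho 0 f v = scale c v) \<longleftrightarrow> (\<forall>f. \<exists>c. rho 0 f v = scale c v)"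
    unfolding inverted_action_def by (metis inversion_poly_inversion_poly minus_zero)
  moreover have "(\<forall>i f. i > 0 \<longrightarrow> inverted_action rho i f v = 0) \<longleftrightarrow> (\<forall>i f. i < 0 \<longrightarrow> rho i f v = 0)"
    unfolding inverted_action_def by (metis inversion_poly_inversion_poly neg_0_less_iff_less minus_minus)
  moreover have "(\<exists>j. v \<in> Vg (- j)) \<longleftrightarrow> (\<exists>j. v \<in> Vg j)"
    by (metis minus_minus)
  ultimately show ?thesis
    unfolding highest_weight_vector_def lowest_weight_vector_def by blast
qed

locale W_module_without_extremal_vectors = W_module_without_hwv +
  assumes no_lwv: "\<nexists>v. lowest_weight_vector scale rho Vg v"
begin

sublocale inverted: W_module_without_hwv scale "inverted_action rho" "\<lambda>j. Vg (- j)"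
proof
  show "W_module scale (inverted_action rho)"
    by (rule W_module_inverted_action[OF W_module])
  show "fin_dim_subspace scale (Vg (- j))" for j
    by (rule fin_dim_Vg)
  show "inverted_action rho i f v \<in> Vg (- (i + j))" if "v \<in> Vg (- j)" for v i j f
    using rho_Vg[OF that] by (simp add: inverted_action_def add.commute)
  show "W_irreducible scale (inverted_action rho)"
    by (rule W_irreducible_inverted_action[OF irreducible])
  show "\<nexists>v. highest_weight_vector scale (inverted_action rho) (\<lambda>j. Vg (- j)) v"
    using no_lwv by (simp add: highest_weight_vector_inverted_action)
qed

text \<open>For \<open>i \<le> -2\<close> this is the case \<open>k = -i - 1\<close> of \<open>kernel_triple_eq_0\<close> for the inverted
  module, where \<open>t\<^sup>iD\<close>, \<open>t\<^sup>i\<^sup>+\<^sup>1D\<close>, \<open>t\<^sup>iD\<^sup>2\<close> become \<open>-t\<^sup>k\<^sup>+\<^sup>1D\<close>, \<open>-t\<^sup>kD\<close>, \<open>t\<^sup>k\<^sup>+\<^sup>1D\<^sup>2\<close>.\<close>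
lemma joint_kernel_eq_0:
  assumes "i \<noteq> 0" and "i \<noteq> -1" and "v \<in> Vg j"
    and "rho i 1 v = 0" and "rho (i + 1) 1 v = 0" and "rho i [:0,1:] v = 0"
  shows "v = 0"
proof (cases "i \<ge> 1")
  case True
  show ?thesis
    by (rule kernel_triple_eq_0[OF True True assms(3-6)])
next
  case False
  define k where "k = - i - 1"
  have "k \<ge> 1" "k + 1 \<ge> 1"
    using False assms(1,2) unfolding k_def by auto
  moreover have "v \<in> Vg (- (- j))"
    using assms(3) by simp
  moreover have "inverted_action rho k 1 v = 0" "inverted_action rho (k + 1) 1 v = 0"
    "inverted_action rho (k + 1) [:0,1:] v = 0"
    using assms(4-6) unfolding inverted_action_def k_def by (simp_all add: rho_uminus_poly add.commute)
  ultimately show ?thesis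
    by (rule inverted.kernel_triple_eq_0)
qed

lemma inj_on_triple_action:
  assumes "i \<noteq> 0" and "i \<noteq> -1"
  shows "inj_on (\<lambda>v. (rho i 1 v, rho (i + 1) 1 v, rho i [:0,1:] v)) (Vg j)"
proof (rule inj_onI)
  fix x y assume "x \<in> Vg j" "y \<in> Vg j"
    and eq: "(rho i 1 x, rho (i + 1) 1 x, rho i [:0,1:] x) = (rho i 1 y, rho (i + 1) 1 y, rho i [:0,1:] y)"
  have "x - y \<in> Vg j"
    using V.subspace_diff[OF subspace_Vg] \<open>x \<in> Vg j\<close> \<open>y \<in> Vg j\<close> by blast
  then have "x - y = 0"
    by (rule joint_kernel_eq_0[OF assms]) (use eq in \<open>simp_all add: rho_diff\<close>)
  then show "x = y"
    by simp
qed

lemma dim_Vg_le: "V.dim (Vg j) \<le> 2 * V.dim (Vg 0) + V.dim (Vg 1)"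
proof (cases "j = 0 \<or> j = 1")
  case True
  then show ?thesis by auto
next
  case False
  have dim_image_le: "V.dim (rho (- j + l) f ` Vg j) \<le> V.dim (Vg l)" for l f
  proof -
    obtain B where "finite B" "V.span B = Vg l"
      using finite_basis_Vg by metis
    moreover have "rho (- j + l) f ` Vg j \<subseteq> Vg l"
      using rho_Vg[of _ j "- j + l" f] by auto
    ultimately show ?thesis
      using V.dim_le_of_subset by blast
  qed
  obtain B where "finite B" "V.span B = Vg j"
    using finite_basis_Vg by metis
  then have "V.dim (Vg j)
      \<le> (\<Sum>T \<leftarrow> [rho (- j) 1, rho (- j + 1) 1, rho (- j) [:0,1:]]. V.dim (T ` Vg j))"
    using False joint_kernel_eq_0[of "- j" _ j]
    by (intro V.dim_le_sum_dim_images[OF subspace_Vg]) (auto simp: module_hom_rho)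
  also have "\<dots> \<le> 2 * V.dim (Vg 0) + V.dim (Vg 1)"
    using dim_image_le[of 0 1] dim_image_le[of 0 "[:0,1:]"] dim_image_le[of 1 1] by simp
  finally show ?thesis .
qed

end

theorem lemma2p2:
  fixes scale :: "'a::{alg_closed_field, field_char_0} \<Rightarrow> 'v::ab_group_add \<Rightarrow> 'v"
    and rho :: "int \<Rightarrow> 'a poly \<Rightarrow> 'v \<Rightarrow> 'v"
    and Vg :: "int \<Rightarrow> 'v set"
  assumes "W_module scale rho"
    and "quasifinite scale rho Vg"
    and "W_irreducible scale rho"
    and "\<not> (\<exists>v. highest_weight_vector scale rho Vg v)"
    and "\<not> (\<exists>v. lowest_weight_vector scale rho Vg v)"
  shows "(\<forall>i j. i \<noteq> 0 \<and> i \<noteq> -1 \<longrightarrow>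
            inj_on (\<lambda>v. (rho i 1 v, rho (i + 1) 1 v, rho i [:0, 1:] v)) (Vg j))
       \<and> (\<forall>j. vector_space.dim scale (Vg j)
               \<le> 2 * vector_space.dim scale (Vg 0) + vector_space.dim scale (Vg 1))"
proof -
  interpret W_module_without_extremal_vectors scale rho Vg
    using assms unfolding quasifinite_def by unfold_locales auto
  show ?thesis
    using inj_on_triple_action dim_Vg_le by blast
qed

end
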